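(* Let $\lambda_1,\lambda_2,\lambda_3\ge 0$ with $\lambda_1^2+\lambda_2^2+\lambda_3^2=1$, and let $|\psi_{\mathrm{g}W}\rangle=\lambda_1|100\rangle+\lambda_2|010\rangle+\lambda_3|001\rangle$ be a generalized $W$ state with density operator $\psi_{\mathrm{g}W}=|\psi_{\mathrm{g}W}\rangle\langle\psi_{\mathrm{g}W}|$. Let $\psi_W$ denote the standard $W$ state, i.e. the case $\lambda_1=\lambda_2=\lambda_3=1/\sqrt3$. Then $$P(\psi_{\mathrm{g}W})\le \tfrac23 = P(\psi_W),$$ where $P$ is the minimal control power of controlled dense coding.
   Context: All logarithms are base 2 and $S(\rho)=-\mathrm{Tr}(\rho\log_2\rho)$ is the von Neumann entropy. For a two-qubit state $\sigma_{kl}$ on qubits $k$ (Alice) and $l$ (Bob), the dense coding channel capacity is $C(\sigma_{kl})=1+S(\sigma_l)-S(\sigma_{kl})$, where $\sigma_l=\mathrm{Tr}_k\sigma_{kl}$. For a three-qubit state $\rho_{123}$ and distinct $j,k,l\in\{1,2,3\}$ (Charlie holds qubit $j$, Alice qubit $k$, Bob qubit $l$), define the controlled dense coding capacity $$C^{jkl}_{CD}(\rho_{123})=\max_U\Big[\sum_{i=0}^1 p_i\, C(\rho^i_{kl})\Big],$$ the maximum over all $2\times2$ unitaries $U$, where $p_i=\langle i|U\rho_jU^\dagger|i\rangle$ with $\rho_j=\mathrm{Tr}_{kl}\rho_{123}$, and $\rho^i_{kl}=\mathrm{Tr}_j\big[(U^\dagger|i\rangle\langle i|U)_j\,\rho_{123}\big]/p_i$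 is the post-measurement state of qubits $k,l$ when Charlie measures qubit $j$ in the basis $\{U^\dagger|0\rangle,U^\dagger|1\rangle\}$ and obtains outcome $i$ (terms with $p_i=0$ are omitted). The control power is $P^{jkl}(\rho_{123})=C^{jkl}_{CD}(\rho_{123})-C(\rho_{kl})$ with $\rho_{kl}=\mathrm{Tr}_j\rho_{123}$, and the minimal control power is $P(\rho_{123})=\min_{(j,k,l)}P^{jkl}(\rho_{123})$, the minimum over all permutations $(j,k,l)$ of $(1,2,3)$. *)

theory Defs
  imports "Jordan_Normal_Form.Schur_Decomposition" "HOL-Computational_Algebra.Polynomial"
begin

(* Conventions: qubits are numbered 1,2,3.  The computational basis state
   |b1 b2 b3> of three qubits has index 4*b1 + 2*b2 + b3 in an 8x8 matrix;
   a two-qubit state of (Alice k, Bob l) has basis index 2*bk + bl;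
   single-qubit index b. *)

definition eta :: "real \<Rightarrow> real" where
  "eta x = (if x \<le> 0 then 0 else x * log 2 x)"

(* von Neumann entropy S(rho) = - Tr(rho log2 rho) = - sum over eigenvalues
   (counted with algebraic multiplicity) of lam * log2 lam, for a Hermitian
   (positive semidefinite) matrix rho. *)
definition vN_entropy :: "complex mat \<Rightarrow> real" where
  "vN_entropy \<rho> = - (\<Sum>z\<in>{z. poly (char_poly \<rho>) z = 0}.
        real (order z (char_poly \<rho>)) * eta (Re z))"

definition unitary2 :: "complex mat \<Rightarrow> bool" where
  "unitary2 U \<longleftrightarrow> U \<in> carrier_mat 2 2 \<and> mat_adjoint U * U = 1\<^sub>m 2"

definition idx3 :: "nat \<Rightarrow> nat \<Rightarrow> nat \<Rightarrow> nat \<Rightarrow> nat \<Rightarrow> nat \<Rightarrow> nat" where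
  "idx3 j k l x a b = x * 2 ^ (3 - j) + a * 2 ^ (3 - k) + b * 2 ^ (3 - l)"

(* Tr_j[(A)_j rho] as a two-qubit operator on qubits k (first) and l (second) *)
definition ptrace_j :: "nat \<Rightarrow> nat \<Rightarrow> nat \<Rightarrow> complex mat \<Rightarrow> complex mat \<Rightarrow> complex mat" where
  "ptrace_j j k l A \<rho> = mat 4 4 (\<lambda>(r, c).
      \<Sum>x<2. \<Sum>y<2. A $$ (x, y) *
        \<rho> $$ (idx3 j k l y (r div 2) (r mod 2), idx3 j k l x (c div 2) (c mod 2)))"

definition red_kl :: "nat \<Rightarrow> nat \<Rightarrow> nat \<Rightarrow> complex mat \<Rightarrow> complex mat" where
  "red_kl j k l \<rho> = ptrace_j j k l (1\<^sub>m 2) \<rho>"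

definition red_j :: "nat \<Rightarrow> nat \<Rightarrow> nat \<Rightarrow> complex mat \<Rightarrow> complex mat" where
  "red_j j k l \<rho> = mat 2 2 (\<lambda>(x, y). \<Sum>a<2. \<Sum>b<2. \<rho> $$ (idx3 j k l x a b, idx3 j k l y a b))"

definition red_second :: "complex mat \<Rightarrow> complex mat" where
  "red_second \<sigma> = mat 2 2 (\<lambda>(b, b'). \<Sum>a<2. \<sigma> $$ (2 * a + b, 2 * a + b'))"

definition dc_capacity :: "complex mat \<Rightarrow> real" where
  "dc_capacity \<sigma> = 1 + vN_entropy (red_second \<sigma>) - vN_entropy \<sigma>"

definition meas_proj :: "complex mat \<Rightarrow> nat \<Rightarrow> complex mat" where
  "meas_proj U i = mat_adjoint U * mat 2 2 (\<lambda>(r, c). if r = i \<and> c = i then 1 else 0) * U"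

definition meas_prob :: "nat \<Rightarrow> nat \<Rightarrow> nat \<Rightarrow> complex mat \<Rightarrow> complex mat \<Rightarrow> nat \<Rightarrow> real" where
  "meas_prob j k l \<rho> U i = Re ((U * red_j j k l \<rho> * mat_adjoint U) $$ (i, i))"

definition post_state :: "nat \<Rightarrow> nat \<Rightarrow> nat \<Rightarrow> complex mat \<Rightarrow> complex mat \<Rightarrow> nat \<Rightarrow> complex mat" where
  "post_state j k l \<rho> U i =
     (1 / complex_of_real (meas_prob j k l \<rho> U i)) \<cdot>\<^sub>m ptrace_j j k l (meas_proj U i) \<rho>"

definition avg_capacity :: "nat \<Rightarrow> nat \<Rightarrow> nat \<Rightarrow> complex mat \<Rightarrow> complex mat \<Rightarrow> real" where
  "avg_capacity j k l \<rho> U = (\<Sum>i\<in>{i. i < 2 \<and> meas_prob j k l \<rho> U i \<noteq> 0}.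
       meas_prob j k l \<rho> U i * dc_capacity (post_state j k l \<rho> U i))"

(* C_CD^{jkl}: maximum over all 2x2 unitaries (written as a supremum; the
   maximum is attained by compactness of U(2)) *)
definition cd_capacity :: "nat \<Rightarrow> nat \<Rightarrow> nat \<Rightarrow> complex mat \<Rightarrow> real" where
  "cd_capacity j k l \<rho> = Sup {avg_capacity j k l \<rho> U | U. unitary2 U}"

definition control_power :: "nat \<Rightarrow> nat \<Rightarrow> nat \<Rightarrow> complex mat \<Rightarrow> real" where
  "control_power j k l \<rho> = cd_capacity j k l \<rho> - dc_capacity (red_kl j k l \<rho>)"

definition min_control_power :: "complex mat \<Rightarrow> real" where
  "min_control_power \<rho> = Min {control_power j k l \<rho> | j k l.
      j \<in> {1,2,3} \<and> k \<in> {1,2,3} \<and> l \<in> {1,2,3} \<and> distinct [j, k, l]}"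

definition gW_vec :: "real \<Rightarrow> real \<Rightarrow> real \<Rightarrow> nat \<Rightarrow> real" where
  "gW_vec l1 l2 l3 n = (if n = 4 then l1 else if n = 2 then l2 else if n = 1 then l3 else 0)"

definition gW_state :: "real \<Rightarrow> real \<Rightarrow> real \<Rightarrow> complex mat" where
  "gW_state l1 l2 l3 = mat 8 8 (\<lambda>(r, c). complex_of_real (gW_vec l1 l2 l3 r * gW_vec l1 l2 l3 c))"

definition W_state :: "complex mat" where
  "W_state = gW_state (1 / sqrt 3) (1 / sqrt 3) (1 / sqrt 3)"

end

theory Submission
  imports Defs
begin

(*
  Fix a labelling (j, k, l) of the qubits.  Whatever basis Charlie measures in, each
  post-measurement state of Alice and Bob is pure, so outcome i contributes capacity 1 + h(m_i),
  where h is the binary entropy and m_i (1 - m_i) is the determinant of Bob's marginal, namely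
  (n_i \<lambda>_k \<lambda>_l / p_i)\<^sup>2 with n_i = |U_i0|\<^sup>2.  The estimate h(m) \<le> 2 \<surd>(m (1 - m)) and
  unitarity of U give C_CD \<le> 1 + 2 \<lambda>_k \<lambda>_l, with equality for the W state measured in the
  computational basis.  The unmeasured state \<rho>_kl has capacity 1 + h(\<lambda>_l\<^sup>2) - h(\<lambda>_j\<^sup>2), so
  the control power is at most 2 \<lambda>_k \<lambda>_l - h(\<lambda>_l\<^sup>2) + h(\<lambda>_j\<^sup>2).  Adding the bounds for the
  three cyclic labellings the entropies cancel, hence
  3 P \<le> 2 (\<lambda>_1 \<lambda>_2 + \<lambda>_2 \<lambda>_3 + \<lambda>_3 \<lambda>_1) \<le> 2 (\<lambda>_1\<^sup>2 + \<lambda>_2\<^sup>2 + \<lambda>_3\<^sup>2) = 2.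
*)

lemma eta_zero [simp]: "eta 0 = 0"
  by (simp add: eta_def)

definition binary_entropy :: "real \<Rightarrow> real" where
  "binary_entropy p = - (eta p + eta (1 - p))"

lemma binary_entropy_sym: "binary_entropy (1 - p) = binary_entropy p"
  unfolding binary_entropy_def by simp

lemma ln_one_plus_sq_bound:
  fixes t :: real
  assumes "0 < t" "t \<le> 1"
  shows "(1 + t\<^sup>2) * ln (1 + t\<^sup>2) - t\<^sup>2 * ln (t\<^sup>2) \<le> 2 * ln 2 * t"
proof -
  define g where "g x = ((1 + x\<^sup>2) * ln (1 + x\<^sup>2) - x\<^sup>2 * ln (x\<^sup>2)) / x" for x :: real
  define g' where "g' x = ((x\<^sup>2 - 1) * ln (1 + x\<^sup>2) - x\<^sup>2 * ln (x\<^sup>2)) / x\<^sup>2" for x :: real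
  have deriv: "(g has_real_derivative g' x) (at x)" if "0 < x" for x
  proof -
    have pos: "0 < 1 + x\<^sup>2" using zero_le_power2[of x] by linarith
    then have "(g has_real_derivative
       ((2 * x * ln (1 + x\<^sup>2) + (1 + x\<^sup>2) * (2 * x / (1 + x\<^sup>2)) - (2 * x * ln (x\<^sup>2) + x\<^sup>2 * (2 * x / x\<^sup>2))) * x
         - ((1 + x\<^sup>2) * ln (1 + x\<^sup>2) - x\<^sup>2 * ln (x\<^sup>2))) / (x * x)) (at x)"
      (is "(g has_real_derivative ?D) _")
      unfolding g_def using \<open>0 < x\<close>
      by (auto intro!: derivative_eq_intros simp: power2_eq_square)
    moreover have "?D = g' x"
    proof -
      have "(1 + x\<^sup>2) * (2 * x / (1 + x\<^sup>2)) = 2 * x" "x\<^sup>2 * (2 * x / x\<^sup>2) = 2 * x"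
        using \<open>0 < x\<close> pos by simp_all
      then show ?thesis
        unfolding g'_def by (simp only:) (rule arg_cong2[where f = "(/)"]; simp add: algebra_simps power2_eq_square)
    qed
    ultimately show ?thesis by simp
  qed
  have "g t \<le> g 1"
  proof (rule DERIV_nonneg_imp_increasing_open[of t 1 g])
    fix x assume x: "t < x" "x < 1"
    have "ln (1 + x\<^sup>2) \<le> x\<^sup>2" by (rule ln_add_one_self_le_self) simp
    then have "(1 - x\<^sup>2) * ln (1 + x\<^sup>2) \<le> (1 - x\<^sup>2) * x\<^sup>2"
      using x assms by (intro mult_left_mono) (auto simp: power_le_one)
    moreover have "ln (x\<^sup>2) \<le> x\<^sup>2 - 1" using x assms by (intro ln_le_minus_one) simp
    then have "x\<^sup>2 * ln (x\<^sup>2) \<le> x\<^sup>2 * (x\<^sup>2 - 1)" by (intro mult_left_mono) auto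
    ultimately have "0 \<le> g' x"
      unfolding g'_def by (intro divide_nonneg_pos) (use x assms in \<open>auto simp: algebra_simps\<close>)
    then show "\<exists>y. (g has_real_derivative y) (at x) \<and> 0 \<le> y"
      using deriv[of x] x assms by auto
  next
    show "continuous_on {t..1} g"
      by (rule DERIV_continuous_on[where D = g'])
        (use deriv assms in \<open>auto intro: has_field_derivative_at_within\<close>)
  qed (fact assms)
  also have "g 1 = 2 * ln 2" unfolding g_def by simp
  finally show ?thesis using assms unfolding g_def by (simp add: divide_le_eq mult.commute)
qed

lemma binary_entropy_le_sqrt_of_le_half:
  assumes p: "0 < p" "p \<le> 1/2"
  shows "binary_entropy p \<le> 2 * sqrt (p * (1 - p))"
proof -
  (* with t\<^sup>2 = p / (1 - p), the entropy in nats is (1 - p) times the left side of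
     ln_one_plus_sq_bound *)
  define t where "t = sqrt (p / (1 - p))"
  have p1: "0 < 1 - p" using p by simp
  have t2: "t\<^sup>2 = p / (1 - p)" unfolding t_def using p p1 by simp
  have t: "0 < t" "t \<le> 1" unfolding t_def using p p1 by simp_all
  have a: "1 + t\<^sup>2 = 1 / (1 - p)" unfolding t2 using p1 by (simp add: field_simps)
  then have la: "ln (1 + t\<^sup>2) = - ln (1 - p)" using p1 by (simp add: ln_div)
  have lb: "ln (t\<^sup>2) = ln p - ln (1 - p)" unfolding t2 using p p1 by (simp add: ln_div)
  define E where "E = - (p * ln p + (1 - p) * ln (1 - p))"
  have "(1 + t\<^sup>2) * ln (1 + t\<^sup>2) - t\<^sup>2 * ln (t\<^sup>2)
      = (1 / (1 - p)) * (- ln (1 - p)) - (p / (1 - p)) * (ln p - ln (1 - p))"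
    unfolding la lb unfolding a unfolding t2 ..
  also have "\<dots> = E / (1 - p)"
    unfolding E_def by (simp add: diff_divide_distrib add_divide_distrib algebra_simps)
  finally have "E / (1 - p) \<le> 2 * ln 2 * t" using ln_one_plus_sq_bound[OF t] by simp
  then have "E \<le> 2 * ln 2 * ((1 - p) * t)" using p1 by (simp add: pos_divide_le_eq mult_ac)
  moreover have "(1 - p) * t = sqrt (p * (1 - p))"
  proof -
    have "(1 - p) * t = sqrt ((1 - p)\<^sup>2 * (p / (1 - p)))"
      unfolding t_def real_sqrt_mult using p1 by simp
    also have "(1 - p)\<^sup>2 * (p / (1 - p)) = p * (1 - p)" using p1 by (simp add: power2_eq_square)
    finally show ?thesis .
  qed
  ultimately have "E \<le> 2 * ln 2 * sqrt (p * (1 - p))" by simp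
  moreover have "binary_entropy p = E / ln 2"
    unfolding binary_entropy_def eta_def E_def log_def using p p1 by (simp add: field_simps)
  ultimately show ?thesis by (simp add: pos_divide_le_eq mult_ac)
qed

lemma binary_entropy_le_sqrt:
  assumes "0 \<le> p" "p \<le> 1"
  shows "binary_entropy p \<le> 2 * sqrt (p * (1 - p))"
proof -
  consider "p = 0" | "p = 1" | "0 < p" "p \<le> 1/2" | "0 < 1 - p" "1 - p \<le> 1/2"
    using assms by linarith
  then show ?thesis
  proof cases
    case 3
    then show ?thesis by (rule binary_entropy_le_sqrt_of_le_half)
  next
    case 4
    then show ?thesis
      using binary_entropy_le_sqrt_of_le_half[of "1 - p"] by (simp add: binary_entropy_sym mult.commute)
  qed (auto simp: binary_entropy_def eta_def)
qed

lemma order_prod_linear_factors: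
  fixes cs :: "'a :: idom list"
  shows "order z (\<Prod>c\<leftarrow>cs. [:-c, 1:]) = count_list cs z"
proof -
  have "order z [:-c, 1:] = (if c = z then 1 else 0)" for c
    using order_linear_power[of z "-c" 1] by auto
  then show ?thesis
    by (subst order_prod_list) (auto, induction cs, auto)
qed

lemma sum_list_map_eq_sum_count_real:
  "sum_list (map (f :: 'a \<Rightarrow> real) xs) = (\<Sum>x\<in>set xs. real (count_list xs x) * f x)"
proof (induction xs)
  case (Cons x xs)
  have "real (count_list (x # xs) y) * f y
      = real (count_list xs y) * f y + (if y = x then f y else 0)" for y
    by (simp add: distrib_right)
  then have "(\<Sum>y\<in>insert x (set xs). real (count_list (x # xs) y) * f y)
      = (\<Sum>y\<in>insert x (set xs). real (count_list xs y) * f y) + f x"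
    by (simp add: sum.distrib sum.delta)
  also have "(\<Sum>y\<in>insert x (set xs). real (count_list xs y) * f y)
      = (\<Sum>y\<in>set xs. real (count_list xs y) * f y)"
    by (cases "x \<in> set xs") (simp_all add: insert_absorb count_list_0_iff)
  finally show ?case using Cons.IH by simp
qed simp

lemma vN_entropy_split_char_poly:
  assumes "char_poly A = (\<Prod>c\<leftarrow>cs. [:-c, 1:])"
  shows "vN_entropy A = - (\<Sum>c\<leftarrow>cs. eta (Re c))"
proof -
  have "{z. poly (char_poly A) z = 0} = set cs"
    unfolding assms by (induction cs) auto
  then show ?thesis
    unfolding vN_entropy_def assms order_prod_linear_factors sum_list_map_eq_sum_count_real
    by simp
qed

lemma vN_entropy_idempotent:
  fixes A :: "complex mat"
  assumes A: "A \<in> carrier_mat n n" and idem: "A * A = A"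
  shows "vN_entropy A = 0"
proof -
  have "z = 0 \<or> z = 1" if "poly (char_poly A) z = 0" for z
  proof -
    have "eigenvalue A z" using that eigenvalue_root_char_poly[OF A] by simp
    then obtain v where v: "v \<in> carrier_vec n" "v \<noteq> 0\<^sub>v n" "A *\<^sub>v v = z \<cdot>\<^sub>v v"
      unfolding eigenvalue_def eigenvector_def using A by auto
    have "(z * z) \<cdot>\<^sub>v v = A *\<^sub>v (A *\<^sub>v v)"
      using v A by (simp add: mult_mat_vec smult_smult_assoc)
    also have "\<dots> = (A * A) *\<^sub>v v" using A v by simp
    also have "\<dots> = z \<cdot>\<^sub>v v" using idem v by simp
    finally have e: "(z * z) \<cdot>\<^sub>v v = z \<cdot>\<^sub>v v" .
    obtain i where i: "i < n" "v $ i \<noteq> 0"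
      using v(1,2) by (metis eq_vecI carrier_vecD index_zero_vec(1,2))
    have "z * z * v $ i = z * v $ i" using arg_cong[OF e, of "\<lambda>w. w $ i"] i v by simp
    then show ?thesis using i by (metis mult_cancel_right mult_cancel_right1)
  qed
  then show ?thesis
    unfolding vN_entropy_def by (force simp: eta_def intro: sum.neutral)
qed

lemma outer_product_idempotent:
  fixes f :: "nat \<Rightarrow> complex"
  assumes s: "s = (\<Sum>i<n. f i * cnj (f i))" "s \<noteq> 0"
  defines "P \<equiv> mat n n (\<lambda>(r, c). f r * cnj (f c) / s)"
  shows "P * P = P"
proof (rule eq_matI)
  fix r c assume "r < dim_row P" "c < dim_col P"
  then have rc: "r < n" "c < n" unfolding P_def by auto
  have "(P * P) $$ (r, c) = (\<Sum>t\<in>{0..<n}. (f r * cnj (f t) / s) * (f t * cnj (f c) / s))"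
    using rc unfolding P_def by (simp add: scalar_prod_def)
  also have "\<dots> = (f r * cnj (f c) / (s * s)) * (\<Sum>t<n. f t * cnj (f t))"
    by (simp add: sum_distrib_left sum_divide_distrib atLeast0LessThan field_simps)
  also have "\<dots> = P $$ (r, c)" using s rc unfolding P_def by simp
  finally show "(P * P) $$ (r, c) = P $$ (r, c)" .
qed (auto simp: P_def)

lemma sum_lessThan_2: "(\<Sum>i<2::nat. f i) = f 0 + (f 1 :: 'a :: comm_monoid_add)"
  by (simp add: numeral_2_eq_2)

lemma sum_lessThan_3: "(\<Sum>i<3::nat. f i) = f 0 + f 1 + (f 2 :: 'a :: comm_monoid_add)"
  by (simp add: numeral_eq_Suc add.assoc)

lemma sum_lessThan_4: "(\<Sum>i<4::nat. f i) = f 0 + f 1 + f 2 + (f 3 :: 'a :: comm_monoid_add)"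
  by (simp add: numeral_eq_Suc add.assoc)

lemma det_2x2:
  assumes "A \<in> carrier_mat 2 2"
  shows "det A = A $$ (0, 0) * A $$ (1, 1) - A $$ (0, 1) * A $$ (1, 0)"
proof -
  have "det A = (\<Sum>i<2. A $$ (i, 0) * cofactor A i 0)"
    by (rule laplace_expansion_column[OF assms]) simp
  then show ?thesis
    unfolding sum_lessThan_2 cofactor_def using assms
    by (simp add: det_single mat_delete_def)
qed

lemma linear_factors_mult: "[:-x, 1:] * [:-y, 1:] = [:x * y, -(x + y), 1 :: 'a :: comm_ring_1:]"
  by (simp add: algebra_simps)

lemma char_poly_2x2:
  fixes A :: "complex mat"
  assumes A: "A \<in> carrier_mat 2 2"
    and "m1 + m2 = A $$ (0, 0) + A $$ (1, 1)"
    and "m1 * m2 = A $$ (0, 0) * A $$ (1, 1) - A $$ (0, 1) * A $$ (1, 0)"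
  shows "char_poly A = (\<Prod>c\<leftarrow>[m1, m2]. [:-c, 1:])"
proof -
  have "char_poly A = [:-(A $$ (0, 0)), 1:] * [:-(A $$ (1, 1)), 1:] - [:-(A $$ (0, 1)):] * [:-(A $$ (1, 0)):]"
    unfolding char_poly_def using A by (subst det_2x2) (auto simp: char_poly_matrix_def)
  then show ?thesis
    using assms(2,3) by (simp add: linear_factors_mult algebra_simps)
qed

lemma vN_entropy_qubit:
  fixes B :: "complex mat"
  assumes B: "B \<in> carrier_mat 2 2"
    and "B $$ (0, 0) = of_real a" "B $$ (1, 1) = of_real d" "B $$ (0, 1) * B $$ (1, 0) = of_real q"
    and "a + d = 1" "m * (1 - m) = a * d - q"
  shows "vN_entropy B = binary_entropy m"
proof -
  have "char_poly B = (\<Prod>c\<leftarrow>[of_real m, of_real (1 - m)]. [:-c, 1:])"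
    by (intro char_poly_2x2[OF B]) (use assms in \<open>simp_all flip: of_real_add of_real_mult of_real_diff\<close>)
  from vN_entropy_split_char_poly[OF this] show ?thesis by (simp add: binary_entropy_def)
qed

lemma vN_entropy_qubit_le:
  fixes B :: "complex mat"
  assumes B: "B \<in> carrier_mat 2 2"
    and "B $$ (0, 0) = of_real a" "B $$ (1, 1) = of_real d" "B $$ (0, 1) * B $$ (1, 0) = of_real q"
    and "a + d = 1" "0 \<le> q" "0 \<le> a * d - q"
  shows "vN_entropy B \<le> 2 * sqrt (a * d - q)"
proof -
  define D where "D = a * d - q"
  define m where "m = (1 - sqrt (1 - 4 * D)) / 2"
  have "1 - 4 * D = (a + d)\<^sup>2 - 4 * (a * d - q)" unfolding D_def using \<open>a + d = 1\<close> by simp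
  also have "\<dots> = (a - d)\<^sup>2 + 4 * q" by (simp add: power2_eq_square algebra_simps)
  finally have "0 \<le> 1 - 4 * D" using \<open>0 \<le> q\<close> by simp
  then have "m * (1 - m) = D" "0 \<le> m" "m \<le> 1"
    unfolding m_def using \<open>0 \<le> a * d - q\<close> unfolding D_def
    by (simp_all add: field_simps power2_eq_square)
  then show ?thesis
    using vN_entropy_qubit[OF assms(1-5), of m] binary_entropy_le_sqrt[of m] unfolding D_def by simp
qed

definition block_mat4 :: "complex \<Rightarrow> complex \<Rightarrow> complex \<Rightarrow> complex \<Rightarrow> complex \<Rightarrow> complex mat" where
  "block_mat4 a p q r s = mat 4 4 (\<lambda>(i, j).
     if i = 0 \<and> j = 0 then a else if i = 1 \<and> j = 1 then p else if i = 2 \<and> j = 2 then q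
     else if i = 1 \<and> j = 2 then r else if i = 2 \<and> j = 1 then s else 0)"

lemma char_poly_block_mat4:
  assumes "p * q = r * s"
  shows "char_poly (block_mat4 a p q r s) = (\<Prod>c\<leftarrow>[0, 0, a, p + q]. [:-c, 1:])"
proof -
  define M where "M = char_poly_matrix (block_mat4 a p q r s)"
  have M: "M \<in> carrier_mat 4 4" unfolding M_def block_mat4_def by simp
  have Me: "M $$ (i, j) = (if i = j then [:0, 1:] else 0) + [:- (block_mat4 a p q r s $$ (i, j)):]"
    if "i < 4" "j < 4" for i j
    using that unfolding M_def block_mat4_def char_poly_matrix_def by simp
  define N where "N = mat_delete M 3 3"
  have N: "N \<in> carrier_mat 3 3" unfolding N_def using mat_delete_carrier[OF M] by simp
  have Ne: "N $$ (i, j) = M $$ (i, j)" if "i < 3" "j < 3" for i j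
    using that M unfolding N_def mat_delete_def by auto
  define K where "K = mat_delete N 0 0"
  have K: "K \<in> carrier_mat 2 2" unfolding K_def using mat_delete_carrier[OF N] by simp
  have Ke: "K $$ (i, j) = N $$ (Suc i, Suc j)" if "i < 2" "j < 2" for i j
    using that N unfolding K_def mat_delete_def by auto
  have "det M = (\<Sum>i<4. M $$ (i, 3) * cofactor M i 3)"
    by (rule laplace_expansion_column[OF M]) simp
  also have "\<dots> = [:0, 1:] * det N"
    unfolding sum_lessThan_4 cofactor_def N_def by (simp add: Me block_mat4_def)
  also have "det N = (\<Sum>i<3. N $$ (i, 0) * cofactor N i 0)"
    by (rule laplace_expansion_column[OF N]) simp
  also have "\<dots> = [:-a, 1:] * det K"
    unfolding sum_lessThan_3 cofactor_def K_def by (simp add: Ne Me block_mat4_def)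
  also have "det K = [:-p, 1:] * [:-q, 1:] - [:-r:] * [:-s:]"
    unfolding det_2x2[OF K] by (simp add: Ke Ne Me block_mat4_def)
  also have "\<dots> = [:0, 1:] * [:-(p + q), 1:]"
    unfolding linear_factors_mult using assms by (simp add: algebra_simps)
  finally show ?thesis unfolding char_poly_def M_def[symmetric] by (simp add: algebra_simps)
qed

lemma mat_adjoint_index:
  assumes "U \<in> carrier_mat n m" "i < m" "j < n"
  shows "mat_adjoint U $$ (i, j) = cnj (U $$ (j, i))"
  using assms unfolding mat_adjoint_def by (simp add: mat_of_rows_def)

lemma dim_mat_adjoint [simp]:
  "dim_row (mat_adjoint U) = dim_col U" "dim_col (mat_adjoint U) = dim_row U"
  unfolding mat_adjoint_def by simp_all

lemma mult_cnj_eq_norm_sq: "z * cnj z = (complex_of_real (cmod z))\<^sup>2"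
  using complex_norm_square[of z] by simp

lemma mult_of_real_mult_cnj:
  "z * of_real x * cnj (z * of_real x) = complex_of_real ((cmod z)\<^sup>2 * x\<^sup>2)"
proof -
  have "z * of_real x * cnj (z * of_real x) = (z * cnj z) * (of_real x)\<^sup>2"
    by (simp add: power2_eq_square mult_ac)
  then show ?thesis unfolding mult_cnj_eq_norm_sq by simp
qed

lemma nat_less_2_iff: "(x :: nat) < 2 \<longleftrightarrow> x = 0 \<or> x = 1"
  by auto

lemma nat_less_4_iff: "(x :: nat) < 4 \<longleftrightarrow> x = 0 \<or> x = 1 \<or> x = 2 \<or> x = 3"
  by auto

lemma unitary2_one: "unitary2 (1\<^sub>m 2)"
proof -
  have "mat_adjoint (1\<^sub>m 2) = (1\<^sub>m 2 :: complex mat)"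
    by (rule eq_matI) (auto simp: mat_adjoint_index[of "1\<^sub>m 2" 2 2])
  then show ?thesis unfolding unitary2_def by simp
qed

lemma unitary2_column_norms:
  assumes "unitary2 U"
  shows "(cmod (U $$ (0, 0)))\<^sup>2 + (cmod (U $$ (1, 0)))\<^sup>2 = 1"
    "(cmod (U $$ (0, 1)))\<^sup>2 + (cmod (U $$ (1, 1)))\<^sup>2 = 1"
proof -
  have U: "U \<in> carrier_mat 2 2" and e: "mat_adjoint U * U = 1\<^sub>m 2"
    using assms unfolding unitary2_def by auto
  have "complex_of_real ((cmod (U $$ (0, c)))\<^sup>2 + (cmod (U $$ (1, c)))\<^sup>2) = (mat_adjoint U * U) $$ (c, c)"
    if "c < 2" for c
    using U that
    by (simp add: scalar_prod_def atLeast0LessThan sum_lessThan_2 mat_adjoint_index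
        mult.commute[of "cnj _"] mult_cnj_eq_norm_sq)
  then have "complex_of_real ((cmod (U $$ (0, c)))\<^sup>2 + (cmod (U $$ (1, c)))\<^sup>2) = 1" if "c < 2" for c
    using that unfolding e by simp
  from this[of 0] this[of 1] show
    "(cmod (U $$ (0, 0)))\<^sup>2 + (cmod (U $$ (1, 0)))\<^sup>2 = 1"
    "(cmod (U $$ (0, 1)))\<^sup>2 + (cmod (U $$ (1, 1)))\<^sup>2 = 1"
    by (simp_all only: of_real_eq_1_iff)
qed

lemma meas_proj_index:
  assumes U: "U \<in> carrier_mat 2 2" and "i < 2" "x < 2" "y < 2"
  shows "meas_proj U i $$ (x, y) = cnj (U $$ (i, x)) * U $$ (i, y)"
  using assms unfolding meas_proj_def nat_less_2_iff
  by (elim disjE; simp add: scalar_prod_def atLeast0LessThan sum_lessThan_2 mat_adjoint_index)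

lemma red_second_entries:
  "red_second \<sigma> $$ (0, 0) = \<sigma> $$ (0, 0) + \<sigma> $$ (2, 2)"
  "red_second \<sigma> $$ (1, 1) = \<sigma> $$ (1, 1) + \<sigma> $$ (3, 3)"
  "red_second \<sigma> $$ (0, 1) = \<sigma> $$ (0, 1) + \<sigma> $$ (2, 3)"
  "red_second \<sigma> $$ (1, 0) = \<sigma> $$ (1, 0) + \<sigma> $$ (3, 2)"
  unfolding red_second_def by (simp_all add: sum_lessThan_2 eval_nat_numeral)

definition gW_coeff :: "real \<Rightarrow> real \<Rightarrow> real \<Rightarrow> nat \<Rightarrow> real" where
  "gW_coeff l1 l2 l3 i = (if i = 1 then l1 else if i = 2 then l2 else l3)"

definition is_perm3 :: "nat \<Rightarrow> nat \<Rightarrow> nat \<Rightarrow> bool" where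
  "is_perm3 j k l \<longleftrightarrow> j \<in> {1, 2, 3} \<and> k \<in> {1, 2, 3} \<and> l \<in> {1, 2, 3} \<and> distinct [j, k, l]"

(* In the labelling (j, k, l) the generalized W state reads
   a |1>_j |00>_kl + b |0>_j |10>_kl + c |0>_j |01>_kl.  This is its amplitude at |x>_j |r>_kl,
   where r = 2 s + t indexes the values s of qubit k and t of qubit l, as in ptrace_j. *)
definition gW_amp :: "real \<Rightarrow> real \<Rightarrow> real \<Rightarrow> nat \<Rightarrow> nat \<Rightarrow> real" where
  "gW_amp a b c x r =
     (if x = 1 \<and> r = 0 then a else if x = 0 \<and> r = 2 then b else if x = 0 \<and> r = 1 then c else 0)"

lemma gW_vec_idx3:
  assumes "is_perm3 j k l" "x < 2" "a < 2" "b < 2"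
  shows "idx3 j k l x a b < 8"
    "gW_vec l1 l2 l3 (idx3 j k l x a b)
       = gW_amp (gW_coeff l1 l2 l3 j) (gW_coeff l1 l2 l3 k) (gW_coeff l1 l2 l3 l) x (2 * a + b)"
proof -
  have "(j = 1 \<and> k = 2 \<and> l = 3) \<or> (j = 1 \<and> k = 3 \<and> l = 2) \<or> (j = 2 \<and> k = 1 \<and> l = 3) \<or>
        (j = 2 \<and> k = 3 \<and> l = 1) \<or> (j = 3 \<and> k = 1 \<and> l = 2) \<or> (j = 3 \<and> k = 2 \<and> l = 1)"
    using assms(1) unfolding is_perm3_def by auto
  moreover have "x = 0 \<or> x = 1" "a = 0 \<or> a = 1" "b = 0 \<or> b = 1" using assms(2-4) by auto
  ultimately show "idx3 j k l x a b < 8"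
    "gW_vec l1 l2 l3 (idx3 j k l x a b)
       = gW_amp (gW_coeff l1 l2 l3 j) (gW_coeff l1 l2 l3 k) (gW_coeff l1 l2 l3 l) x (2 * a + b)"
    by (elim disjE conjE; simp add: idx3_def gW_vec_def gW_amp_def gW_coeff_def)+
qed

locale gW_labelling =
  fixes l1 l2 l3 :: real and j k l :: nat
  assumes perm: "is_perm3 j k l"
    and nonneg: "0 \<le> l1" "0 \<le> l2" "0 \<le> l3"
    and normalized: "l1\<^sup>2 + l2\<^sup>2 + l3\<^sup>2 = 1"
begin

abbreviation "\<rho> \<equiv> gW_state l1 l2 l3"
abbreviation "A \<equiv> gW_coeff l1 l2 l3 j"
abbreviation "B \<equiv> gW_coeff l1 l2 l3 k"
abbreviation "C \<equiv> gW_coeff l1 l2 l3 l"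

lemma coeff_nonneg: "0 \<le> gW_coeff l1 l2 l3 i"
  using nonneg by (simp add: gW_coeff_def)

lemma coeff_sum_sq: "A\<^sup>2 + B\<^sup>2 + C\<^sup>2 = 1"
  using perm normalized unfolding is_perm3_def by (auto simp: gW_coeff_def)

lemma state_entry:
  assumes "x < 2" "a < 2" "b < 2" "y < 2" "a' < 2" "b' < 2"
  shows "\<rho> $$ (idx3 j k l x a b, idx3 j k l y a' b')
     = complex_of_real (gW_amp A B C x (2 * a + b) * gW_amp A B C y (2 * a' + b'))"
  using gW_vec_idx3[OF perm] assms unfolding gW_state_def by simp

lemma state_entry_split:
  assumes "y < 2" "r < 4" "x < 2" "c < 4"
  shows "\<rho> $$ (idx3 j k l y (r div 2) (r mod 2), idx3 j k l x (c div 2) (c mod 2))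
     = complex_of_real (gW_amp A B C y r * gW_amp A B C x c)"
  using state_entry[of y "r div 2" "r mod 2" x "c div 2" "c mod 2"] assms by simp

lemma red_kl_state:
  "red_kl j k l \<rho> = block_mat4 (of_real (A\<^sup>2)) (of_real (C\<^sup>2)) (of_real (B\<^sup>2)) (of_real (C * B)) (of_real (B * C))"
  (is "_ = ?M")
proof (rule eq_matI)
  fix r c assume "r < dim_row ?M" "c < dim_col ?M"
  then have rc: "r < 4" "c < 4" by (auto simp: block_mat4_def)
  then have "red_kl j k l \<rho> $$ (r, c)
      = of_real (gW_amp A B C 0 r * gW_amp A B C 0 c + gW_amp A B C 1 r * gW_amp A B C 1 c)"
    unfolding red_kl_def ptrace_j_def by (simp add: sum_lessThan_2 state_entry_split)
  then show "red_kl j k l \<rho> $$ (r, c) = ?M $$ (r, c)"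
    using rc unfolding nat_less_4_iff
    by (elim disjE; simp add: block_mat4_def gW_amp_def power2_eq_square)
qed (auto simp: red_kl_def ptrace_j_def block_mat4_def)

lemma dc_capacity_red_kl: "dc_capacity (red_kl j k l \<rho>) = 1 + binary_entropy (C\<^sup>2) - binary_entropy (A\<^sup>2)"
proof -
  have eq: "of_real (C\<^sup>2) + of_real (B\<^sup>2) = complex_of_real (1 - A\<^sup>2)"
    unfolding of_real_add[symmetric] using coeff_sum_sq by (intro arg_cong[where f = of_real]) simp
  have "char_poly (red_kl j k l \<rho>) = (\<Prod>c\<leftarrow>[0, 0, of_real (A\<^sup>2), of_real (1 - A\<^sup>2)]. [:-c, 1:])"
    unfolding red_kl_state eq[symmetric] by (rule char_poly_block_mat4) (simp add: power2_eq_square)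
  from vN_entropy_split_char_poly[OF this]
  have S_kl: "vN_entropy (red_kl j k l \<rho>) = binary_entropy (A\<^sup>2)" by (simp add: binary_entropy_def)
  have sum: "A\<^sup>2 + B\<^sup>2 = 1 - C\<^sup>2" using coeff_sum_sq by simp
  have "char_poly (red_second (red_kl j k l \<rho>)) = (\<Prod>c\<leftarrow>[of_real (1 - C\<^sup>2), of_real (C\<^sup>2)]. [:-c, 1:])"
    unfolding sum[symmetric]
  proof (rule char_poly_2x2)
    show "red_second (red_kl j k l \<rho>) \<in> carrier_mat 2 2" unfolding red_second_def by simp
  qed (simp_all add: red_second_def sum_lessThan_2 red_kl_state block_mat4_def)
  from vN_entropy_split_char_poly[OF this]
  have S_l: "vN_entropy (red_second (red_kl j k l \<rho>)) = binary_entropy (C\<^sup>2)"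
    by (simp add: binary_entropy_def add.commute)
  show ?thesis unfolding dc_capacity_def S_kl S_l by simp
qed

lemma red_j_state:
  "red_j j k l \<rho> = mat 2 2 (\<lambda>(x, y). if x = 0 \<and> y = 0 then of_real (B\<^sup>2 + C\<^sup>2)
      else if x = 1 \<and> y = 1 then of_real (A\<^sup>2) else 0)"
  (is "_ = ?M")
proof (rule eq_matI)
  fix x y assume "x < dim_row ?M" "y < dim_col ?M"
  then have "x < 2" "y < 2" by auto
  then show "red_j j k l \<rho> $$ (x, y) = ?M $$ (x, y)"
    unfolding red_j_def nat_less_2_iff
    by (elim disjE; simp add: sum_lessThan_2 state_entry gW_amp_def power2_eq_square)
qed (auto simp: red_j_def)

lemma meas_prob_state:
  assumes U: "U \<in> carrier_mat 2 2" and i: "i < 2"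
  shows "meas_prob j k l \<rho> U i = (cmod (U $$ (i, 0)))\<^sup>2 * (B\<^sup>2 + C\<^sup>2) + (cmod (U $$ (i, 1)))\<^sup>2 * A\<^sup>2"
proof -
  have "(U * red_j j k l \<rho> * mat_adjoint U) $$ (i, i)
     = U $$ (i, 0) * cnj (U $$ (i, 0)) * of_real (B\<^sup>2 + C\<^sup>2) + U $$ (i, 1) * cnj (U $$ (i, 1)) * of_real (A\<^sup>2)"
    unfolding red_j_state using U i
    by (simp add: scalar_prod_def atLeast0LessThan sum_lessThan_2 mat_adjoint_index algebra_simps)
  then show ?thesis unfolding meas_prob_def by (simp add: mult_cnj_eq_norm_sq)
qed

(* Charlie's outcome i leaves Alice and Bob in the pure state with these (unnormalized)
   amplitudes, obtained by contracting qubit j with the row i of U. *)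
definition post_amp :: "complex mat \<Rightarrow> nat \<Rightarrow> nat \<Rightarrow> complex" where
  "post_amp U i r = U $$ (i, 0) * of_real (gW_amp A B C 0 r) + U $$ (i, 1) * of_real (gW_amp A B C 1 r)"

lemma post_amp_simps:
  "post_amp U i 0 = U $$ (i, 1) * of_real A" "post_amp U i 1 = U $$ (i, 0) * of_real C"
  "post_amp U i 2 = U $$ (i, 0) * of_real B" "post_amp U i 3 = 0"
  "post_amp U i (Suc 0) = U $$ (i, 0) * of_real C" "post_amp U i (Suc (Suc (Suc 0))) = 0"
  unfolding post_amp_def gW_amp_def by simp_all

lemma post_state_eq:
  assumes U: "U \<in> carrier_mat 2 2" and i: "i < 2"
  shows "post_state j k l \<rho> U i =
     mat 4 4 (\<lambda>(r, c). post_amp U i r * cnj (post_amp U i c) / of_real (meas_prob j k l \<rho> U i))"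
proof -
  have "ptrace_j j k l (meas_proj U i) \<rho> = mat 4 4 (\<lambda>(r, c). post_amp U i r * cnj (post_amp U i c))"
  proof (rule eq_matI)
    fix r c assume "r < dim_row (mat 4 4 (\<lambda>(r, c). post_amp U i r * cnj (post_amp U i c)))"
      "c < dim_col (mat 4 4 (\<lambda>(r, c). post_amp U i r * cnj (post_amp U i c)))"
    then show "ptrace_j j k l (meas_proj U i) \<rho> $$ (r, c)
        = mat 4 4 (\<lambda>(r, c). post_amp U i r * cnj (post_amp U i c)) $$ (r, c)"
      unfolding ptrace_j_def post_amp_def using U i
      by (simp add: sum_lessThan_2 state_entry_split meas_proj_index algebra_simps)
  qed (auto simp: ptrace_j_def)
  then show ?thesis unfolding post_state_def by (intro eq_matI) auto
qed

lemma vN_entropy_post_state: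
  assumes U: "U \<in> carrier_mat 2 2" and i: "i < 2" and P: "meas_prob j k l \<rho> U i \<noteq> 0"
  shows "vN_entropy (post_state j k l \<rho> U i) = 0"
proof -
  have "(\<Sum>r<4. post_amp U i r * cnj (post_amp U i r)) = of_real (meas_prob j k l \<rho> U i)"
    unfolding meas_prob_state[OF U i] sum_lessThan_4 post_amp_simps mult_of_real_mult_cnj
    by (simp add: algebra_simps)
  then show ?thesis
    unfolding post_state_eq[OF U i] using P
    by (intro vN_entropy_idempotent[of _ 4] outer_product_idempotent) auto
qed

lemma red_second_post_state:
  assumes U: "U \<in> carrier_mat 2 2" and i: "i < 2"
  defines "P \<equiv> meas_prob j k l \<rho> U i" and "n0 \<equiv> (cmod (U $$ (i, 0)))\<^sup>2" and "n1 \<equiv> (cmod (U $$ (i, 1)))\<^sup>2"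
  defines "\<sigma> \<equiv> red_second (post_state j k l \<rho> U i)"
  shows "\<sigma> \<in> carrier_mat 2 2"
    "\<sigma> $$ (0, 0) = of_real ((n1 * A\<^sup>2 + n0 * B\<^sup>2) / P)"
    "\<sigma> $$ (1, 1) = of_real (n0 * C\<^sup>2 / P)"
    "\<sigma> $$ (0, 1) * \<sigma> $$ (1, 0) = of_real ((n1 * A\<^sup>2) * (n0 * C\<^sup>2) / P\<^sup>2)"
proof -
  show "\<sigma> \<in> carrier_mat 2 2" unfolding \<sigma>_def red_second_def by simp
  have e: "post_state j k l \<rho> U i $$ (r, c) = post_amp U i r * cnj (post_amp U i c) / of_real P"
    if "r < 4" "c < 4" for r c
    using that unfolding post_state_eq[OF U i] P_def by simp
  have lt: "(0 :: nat) < 4" "(1 :: nat) < 4" "(2 :: nat) < 4" "(3 :: nat) < 4" by simp_all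
  show "\<sigma> $$ (0, 0) = of_real ((n1 * A\<^sup>2 + n0 * B\<^sup>2) / P)"
    unfolding \<sigma>_def red_second_entries e[OF lt(1) lt(1)] e[OF lt(3) lt(3)] post_amp_simps
      mult_of_real_mult_cnj n0_def n1_def
    by (simp add: add_divide_distrib)
  show "\<sigma> $$ (1, 1) = of_real (n0 * C\<^sup>2 / P)"
    unfolding \<sigma>_def red_second_entries e[OF lt(2) lt(2)] e[OF lt(4) lt(4)] post_amp_simps
      mult_of_real_mult_cnj n0_def
    by simp
  have "\<sigma> $$ (0, 1) * \<sigma> $$ (1, 0)
      = (post_amp U i 0 * cnj (post_amp U i 1)) * (post_amp U i 1 * cnj (post_amp U i 0)) / (of_real P)\<^sup>2"
    unfolding \<sigma>_def red_second_entries e[OF lt(1) lt(2)] e[OF lt(3) lt(4)] e[OF lt(2) lt(1)]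
      e[OF lt(4) lt(3)] post_amp_simps
    by (simp add: power2_eq_square)
  also have "\<dots> = (post_amp U i 0 * cnj (post_amp U i 0)) * (post_amp U i 1 * cnj (post_amp U i 1)) / (of_real P)\<^sup>2"
    by (simp add: mult_ac)
  also have "\<dots> = of_real ((n1 * A\<^sup>2) * (n0 * C\<^sup>2) / P\<^sup>2)"
    unfolding n0_def n1_def post_amp_simps mult_of_real_mult_cnj by (simp add: power_divide)
  finally show "\<sigma> $$ (0, 1) * \<sigma> $$ (1, 0) = of_real ((n1 * A\<^sup>2) * (n0 * C\<^sup>2) / P\<^sup>2)" .
qed

lemma post_state_bob_marginal:
  assumes U: "U \<in> carrier_mat 2 2" and i: "i < 2" and P: "meas_prob j k l \<rho> U i \<noteq> 0"
  defines "\<sigma> \<equiv> red_second (post_state j k l \<rho> U i)"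
  obtains a d q where
    "\<sigma> $$ (0, 0) = of_real a" "\<sigma> $$ (1, 1) = of_real d" "\<sigma> $$ (0, 1) * \<sigma> $$ (1, 0) = of_real q"
    "a + d = 1" "0 \<le> q"
    "a * d - q = ((cmod (U $$ (i, 0)))\<^sup>2 * B * C / meas_prob j k l \<rho> U i)\<^sup>2"
proof -
  define P where "P = meas_prob j k l \<rho> U i"
  define n0 where "n0 = (cmod (U $$ (i, 0)))\<^sup>2"
  define n1 where "n1 = (cmod (U $$ (i, 1)))\<^sup>2"
  note entries = red_second_post_state[OF U i, folded P_def n0_def n1_def \<sigma>_def]
  have Pe: "P = n0 * (B\<^sup>2 + C\<^sup>2) + n1 * A\<^sup>2"
    unfolding P_def n0_def n1_def by (rule meas_prob_state[OF U i])
  show ?thesis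
  proof (rule that[OF entries(2-4)])
    show "(n1 * A\<^sup>2 + n0 * B\<^sup>2) / P + n0 * C\<^sup>2 / P = 1"
      using P Pe unfolding P_def[symmetric] by (simp add: add_divide_distrib [symmetric] algebra_simps)
    show "0 \<le> (n1 * A\<^sup>2) * (n0 * C\<^sup>2) / P\<^sup>2" unfolding n0_def n1_def by simp
    have "(n1 * A\<^sup>2 + n0 * B\<^sup>2) / P * (n0 * C\<^sup>2 / P) - (n1 * A\<^sup>2) * (n0 * C\<^sup>2) / P\<^sup>2
        = (n0 * B * C / P)\<^sup>2"
      using P unfolding P_def[symmetric] by (simp add: field_simps power2_eq_square)
    then show "(n1 * A\<^sup>2 + n0 * B\<^sup>2) / P * (n0 * C\<^sup>2 / P) - (n1 * A\<^sup>2) * (n0 * C\<^sup>2) / P\<^sup>2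
        = ((cmod (U $$ (i, 0)))\<^sup>2 * B * C / meas_prob j k l \<rho> U i)\<^sup>2"
      unfolding P_def n0_def .
  qed
qed

lemma dc_capacity_post_state:
  assumes U: "U \<in> carrier_mat 2 2" and i: "i < 2" and P: "meas_prob j k l \<rho> U i \<noteq> 0"
    and m: "m * (1 - m) = ((cmod (U $$ (i, 0)))\<^sup>2 * B * C / meas_prob j k l \<rho> U i)\<^sup>2"
  shows "dc_capacity (post_state j k l \<rho> U i) = 1 + binary_entropy m"
proof -
  obtain a d q where entries: "red_second (post_state j k l \<rho> U i) $$ (0, 0) = of_real a"
    "red_second (post_state j k l \<rho> U i) $$ (1, 1) = of_real d"
    "red_second (post_state j k l \<rho> U i) $$ (0, 1) * red_second (post_state j k l \<rho> U i) $$ (1, 0) = of_real q"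
    and sum: "a + d = 1" and "0 \<le> q"
    and D: "a * d - q = ((cmod (U $$ (i, 0)))\<^sup>2 * B * C / meas_prob j k l \<rho> U i)\<^sup>2"
    by (rule post_state_bob_marginal[OF U i P])
  have "vN_entropy (red_second (post_state j k l \<rho> U i)) = binary_entropy m"
    using red_second_post_state(1)[OF U i] entries sum
    by (rule vN_entropy_qubit) (simp only: m D)
  then show ?thesis unfolding dc_capacity_def vN_entropy_post_state[OF U i P] by simp
qed

lemma dc_capacity_post_state_le:
  assumes U: "U \<in> carrier_mat 2 2" and i: "i < 2" and P: "meas_prob j k l \<rho> U i \<noteq> 0"
  shows "dc_capacity (post_state j k l \<rho> U i)
    \<le> 1 + 2 * ((cmod (U $$ (i, 0)))\<^sup>2 * B * C / meas_prob j k l \<rho> U i)"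
proof -
  have "0 \<le> meas_prob j k l \<rho> U i" by (simp add: meas_prob_state[OF U i])
  then have nonneg: "0 \<le> (cmod (U $$ (i, 0)))\<^sup>2 * B * C / meas_prob j k l \<rho> U i"
    using coeff_nonneg by simp
  obtain a d q where entries: "red_second (post_state j k l \<rho> U i) $$ (0, 0) = of_real a"
    "red_second (post_state j k l \<rho> U i) $$ (1, 1) = of_real d"
    "red_second (post_state j k l \<rho> U i) $$ (0, 1) * red_second (post_state j k l \<rho> U i) $$ (1, 0) = of_real q"
    and sum: "a + d = 1" and q: "0 \<le> q"
    and D: "a * d - q = ((cmod (U $$ (i, 0)))\<^sup>2 * B * C / meas_prob j k l \<rho> U i)\<^sup>2"
    by (rule post_state_bob_marginal[OF U i P])
  have "vN_entropy (red_second (post_state j k l \<rho> U i)) \<le> 2 * sqrt (a * d - q)"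
    using red_second_post_state(1)[OF U i] entries sum q
    by (rule vN_entropy_qubit_le) (simp add: D)
  then show ?thesis
    unfolding dc_capacity_def vN_entropy_post_state[OF U i P] D using nonneg by simp
qed

lemma avg_capacity_le:
  assumes U: "unitary2 U"
  shows "avg_capacity j k l \<rho> U \<le> 1 + 2 * B * C"
proof -
  have Uc: "U \<in> carrier_mat 2 2" using U unfolding unitary2_def by auto
  define P where "P i = meas_prob j k l \<rho> U i" for i
  define n0 where "n0 i = (cmod (U $$ (i, 0)))\<^sup>2" for i
  define f where "f i = P i + 2 * n0 i * B * C" for i
  have Pe: "P i = n0 i * (B\<^sup>2 + C\<^sup>2) + (cmod (U $$ (i, 1)))\<^sup>2 * A\<^sup>2" if "i < 2" for i
    unfolding P_def n0_def by (rule meas_prob_state[OF Uc that])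
  have "0 \<le> f i" if "i < 2" for i
    unfolding f_def using Pe[OF that] coeff_nonneg unfolding n0_def by simp
  moreover have "P i * dc_capacity (post_state j k l \<rho> U i) \<le> f i" if "i < 2" "P i \<noteq> 0" for i
  proof -
    have "0 \<le> P i" using Pe[OF that(1)] unfolding n0_def by simp
    then have "0 < P i" using that(2) by simp
    then have "P i * dc_capacity (post_state j k l \<rho> U i) \<le> P i * (1 + 2 * (n0 i * B * C / P i))"
      using dc_capacity_post_state_le[OF Uc that(1) that(2)[unfolded P_def]]
      unfolding P_def n0_def by (intro mult_left_mono) auto
    also have "\<dots> = f i" unfolding f_def using \<open>0 < P i\<close> by (simp add: field_simps)
    finally show ?thesis .
  qed
  ultimately have "avg_capacity j k l \<rho> U \<le> (\<Sum>i<2. f i)"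
    unfolding avg_capacity_def P_def[symmetric]
    by (intro order.trans[OF sum_mono sum_mono2]) auto
  also have "(\<Sum>i<2. f i) = (n0 0 + n0 1) * (B\<^sup>2 + C\<^sup>2 + 2 * B * C)
      + ((cmod (U $$ (0, 1)))\<^sup>2 + (cmod (U $$ (1, 1)))\<^sup>2) * A\<^sup>2"
    unfolding sum_lessThan_2 f_def using Pe[of 0] Pe[of 1] by (simp add: algebra_simps)
  also have "\<dots> = 1 + 2 * B * C"
    using unitary2_column_norms[OF U] coeff_sum_sq unfolding n0_def by (simp add: algebra_simps)
  finally show ?thesis .
qed

lemma cd_capacity_le: "cd_capacity j k l \<rho> \<le> 1 + 2 * B * C"
  unfolding cd_capacity_def by (rule cSup_least) (use unitary2_one avg_capacity_le in auto)

(* For the W state the bound 1 + 2 B C = 5/3 is attained by measuring in the computational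
   basis: outcome 0 (probability 2/3) leaves a Bell state, outcome 1 a product state. *)
lemma cd_capacity_W:
  assumes "l1 = 1 / sqrt 3" "l2 = 1 / sqrt 3" "l3 = 1 / sqrt 3"
  shows "cd_capacity j k l \<rho> = 5 / 3"
proof -
  have coeff: "gW_coeff l1 l2 l3 i = 1 / sqrt 3" for i using assms by (simp add: gW_coeff_def)
  have sq: "(1 / sqrt 3 :: real)\<^sup>2 = 1 / 3" by (simp add: power_divide)
  have I: "1\<^sub>m 2 \<in> carrier_mat 2 2" by simp
  have P0: "meas_prob j k l \<rho> (1\<^sub>m 2) 0 = 2 / 3" and P1: "meas_prob j k l \<rho> (1\<^sub>m 2) 1 = 1 / 3"
    using meas_prob_state[OF I, of 0] meas_prob_state[OF I, of 1] unfolding coeff sq by simp_all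
  have "dc_capacity (post_state j k l \<rho> (1\<^sub>m 2) 0) = 1 + binary_entropy (1 / 2)"
    by (rule dc_capacity_post_state[OF I]) (simp_all add: P0 coeff power2_eq_square)
  then have C0: "dc_capacity (post_state j k l \<rho> (1\<^sub>m 2) 0) = 2"
    by (simp add: binary_entropy_def eta_def log_divide)
  have "dc_capacity (post_state j k l \<rho> (1\<^sub>m 2) 1) = 1 + binary_entropy 0"
    by (rule dc_capacity_post_state[OF I]) (use P1 in simp_all)
  then have C1: "dc_capacity (post_state j k l \<rho> (1\<^sub>m 2) 1) = 1"
    by (simp add: binary_entropy_def eta_def)
  have "{i. i < 2 \<and> meas_prob j k l \<rho> (1\<^sub>m 2) i \<noteq> 0} = {0, 1}" using P0 P1 by auto
  then have "avg_capacity j k l \<rho> (1\<^sub>m 2) = 5 / 3"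
    unfolding avg_capacity_def using P0 P1 C0 C1 by simp
  moreover have "x \<le> 5 / 3" if x: "x \<in> {avg_capacity j k l \<rho> U | U. unitary2 U}" for x
  proof -
    obtain U where "unitary2 U" "x = avg_capacity j k l \<rho> U" using x by blast
    moreover have "1 + 2 * B * C = 5 / 3" unfolding coeff by (simp add: power2_eq_square)
    ultimately show ?thesis using avg_capacity_le[of U] by linarith
  qed
  ultimately show ?thesis
    unfolding cd_capacity_def by (intro cSup_eq_maximum) (auto intro: unitary2_one)
qed

end

lemma control_power_gW_le:
  assumes "is_perm3 j k l" "0 \<le> l1" "0 \<le> l2" "0 \<le> l3" "l1\<^sup>2 + l2\<^sup>2 + l3\<^sup>2 = 1"
  shows "control_power j k l (gW_state l1 l2 l3)
    \<le> 2 * gW_coeff l1 l2 l3 k * gW_coeff l1 l2 l3 l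
       - binary_entropy ((gW_coeff l1 l2 l3 l)\<^sup>2) + binary_entropy ((gW_coeff l1 l2 l3 j)\<^sup>2)"
proof -
  interpret gW_labelling l1 l2 l3 j k l by unfold_locales (use assms in auto)
  show ?thesis unfolding control_power_def dc_capacity_red_kl using cd_capacity_le by simp
qed

lemma control_power_W:
  assumes "is_perm3 j k l"
  shows "control_power j k l W_state = 2 / 3"
proof -
  interpret gW_labelling "1 / sqrt 3" "1 / sqrt 3" "1 / sqrt 3" j k l
    by unfold_locales (use assms in \<open>auto simp: power_divide\<close>)
  show ?thesis
    unfolding control_power_def W_state_def dc_capacity_red_kl cd_capacity_W[OF refl refl refl]
    by (simp add: gW_coeff_def)
qed

lemma finite_control_powers:
  "finite {control_power j k l \<rho> | j k l. j \<in> {1, 2, 3} \<and> k \<in> {1, 2, 3} \<and> l \<in> {1, 2, 3} \<and> distinct [j, k, l]}"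
proof (rule finite_subset)
  show "{control_power j k l \<rho> | j k l. j \<in> {1, 2, 3} \<and> k \<in> {1, 2, 3} \<and> l \<in> {1, 2, 3} \<and> distinct [j, k, l]}
      \<subseteq> (\<lambda>(j, k, l). control_power j k l \<rho>) ` ({1, 2, 3} \<times> {1, 2, 3} \<times> {1, 2, 3})"
  proof
    fix x assume "x \<in> {control_power j k l \<rho> | j k l. j \<in> {1, 2, 3} \<and> k \<in> {1, 2, 3} \<and> l \<in> {1, 2, 3} \<and> distinct [j, k, l]}"
    then obtain j k l where x: "x = control_power j k l \<rho>"
      and jkl: "(j, k, l) \<in> {1, 2, 3} \<times> {1, 2, 3} \<times> {1, 2, 3}"
      by blast
    show "x \<in> (\<lambda>(j, k, l). control_power j k l \<rho>) ` ({1, 2, 3} \<times> {1, 2, 3} \<times> {1, 2, 3})"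
      unfolding x using jkl by (rule rev_image_eqI) simp
  qed
qed simp

lemma min_control_power_le:
  assumes "is_perm3 j k l"
  shows "min_control_power \<rho> \<le> control_power j k l \<rho>"
  unfolding min_control_power_def
  by (rule Min_le[OF finite_control_powers])
    (use assms in \<open>unfold is_perm3_def, intro CollectI exI, auto\<close>)

lemma min_control_power_eqI:
  assumes "\<And>j k l. is_perm3 j k l \<Longrightarrow> control_power j k l \<rho> = c"
  shows "min_control_power \<rho> = c"
proof -
  let ?S = "{control_power j k l \<rho> | j k l. j \<in> {1, 2, 3} \<and> k \<in> {1, 2, 3} \<and> l \<in> {1, 2, 3} \<and> distinct [j, k, l]}"
  have "c \<in> ?S"
    by (intro CollectI exI[of _ 1] exI[of _ 2] exI[of _ 3]) (use assms[of 1 2 3] in \<open>simp add: is_perm3_def\<close>)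
  moreover have "?S \<subseteq> {c}"
  proof
    fix x assume "x \<in> ?S"
    then obtain j k l where "x = control_power j k l \<rho>" "is_perm3 j k l"
      unfolding is_perm3_def by blast
    then show "x \<in> {c}" using assms by simp
  qed
  ultimately have "?S = {c}" by blast
  then show ?thesis unfolding min_control_power_def by (simp only: Min_singleton)
qed

lemma sum_products_le_sum_squares:
  fixes x y z :: real
  shows "x * y + y * z + z * x \<le> x\<^sup>2 + y\<^sup>2 + z\<^sup>2"
proof -
  have "0 \<le> (x - y)\<^sup>2 + (y - z)\<^sup>2 + (z - x)\<^sup>2" by simp
  then show ?thesis by (simp add: power2_diff algebra_simps)
qed

theorem proposition1:
  fixes l1 l2 l3 :: real
  assumes "l1 \<ge> 0" and "l2 \<ge> 0" and "l3 \<ge> 0"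
    and "l1\<^sup>2 + l2\<^sup>2 + l3\<^sup>2 = 1"
  shows "min_control_power (gW_state l1 l2 l3) \<le> 2 / 3
     \<and> min_control_power W_state = 2 / 3"
proof
  let ?P = "min_control_power (gW_state l1 l2 l3)"
  have bound: "?P \<le> 2 * gW_coeff l1 l2 l3 k * gW_coeff l1 l2 l3 l
      - binary_entropy ((gW_coeff l1 l2 l3 l)\<^sup>2) + binary_entropy ((gW_coeff l1 l2 l3 j)\<^sup>2)"
    if "is_perm3 j k l" for j k l
    using min_control_power_le[OF that, of "gW_state l1 l2 l3"] control_power_gW_le[OF that assms] by linarith
  have "is_perm3 1 2 3" "is_perm3 2 3 1" "is_perm3 3 1 2" by (simp_all add: is_perm3_def)
  from bound[OF this(1)] bound[OF this(2)] bound[OF this(3)]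
  have "3 * ?P \<le> 2 * (l1 * l2 + l2 * l3 + l3 * l1)" by (simp add: gW_coeff_def)
  moreover have "l1 * l2 + l2 * l3 + l3 * l1 \<le> 1"
    using sum_products_le_sum_squares[of l1 l2 l3] assms(4) by simp
  ultimately show "?P \<le> 2 / 3" by simp
next
  show "min_control_power W_state = 2 / 3"
    by (rule min_control_power_eqI) (rule control_power_W)
qed

end
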